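(* Let $A$ be a commutative unital Rickart C*-algebra. Then the lattice $L_A$ has a pseudocomplement $\neg$, determined by $\neg\mathtt{D}_a=\mathtt{D}_{[a=0]}$ for $a\in A^+$.
   Context: $L_A$ is the distributive lattice freely generated by symbols $\mathtt{D}_a$, $a\in A_{\mathrm{sa}}$, subject to $\mathtt{D}_1=1$, $\mathtt{D}_a\wedge\mathtt{D}_{-a}=0$, $\mathtt{D}_{-b^2}=0$, $\mathtt{D}_{a+b}\le\mathtt{D}_a\vee\mathtt{D}_b$, $\mathtt{D}_{ab}=(\mathtt{D}_a\wedge\mathtt{D}_b)\vee(\mathtt{D}_{-a}\wedge\mathtt{D}_{-b})$; every element of $L_A$ is of the form $\mathtt{D}_a$ with $a\in A^+$. For a commutative Rickart C*-algebra and $a\in A$, $[a=0]$ is the unique projection with $a[a=0]=0$ and $b=b[a=0]$ whenever $ab=0$. A pseudocomplement on a distributive lattice $L$ with $0$ is an antitone map $\neg\colon L\to L$ such that $x\wedge y=0$ iff $x\le\neg y$. *)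

theory Defs
  imports "HOL-Analysis.Analysis"
begin

class comm_cstar_algebra = comm_ring_1 + real_normed_algebra_1 + banach +
  fixes scaleC :: "complex \<Rightarrow> 'a \<Rightarrow> 'a"
    and cstar :: "'a \<Rightarrow> 'a"
  assumes scaleC_add_left: "scaleC (c + d) x = scaleC c x + scaleC d x"
    and scaleC_add_right: "scaleC c (x + y) = scaleC c x + scaleC c y"
    and scaleC_scaleC: "scaleC c (scaleC d x) = scaleC (c * d) x"
    and scaleC_one: "scaleC 1 x = x"
    and scaleC_of_real: "scaleC (complex_of_real r) x = scaleR r x"
    and scaleC_mult_left: "scaleC c (x * y) = scaleC c x * y"
    and norm_scaleC: "norm (scaleC c x) = cmod c * norm x"
    and cstar_cstar: "cstar (cstar x) = x"
    and cstar_add: "cstar (x + y) = cstar x + cstar y"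
    and cstar_mult: "cstar (x * y) = cstar y * cstar x"
    and cstar_scaleC: "cstar (scaleC c x) = scaleC (cnj c) (cstar x)"
    and cstar_identity: "norm (cstar x * x) = (norm x)\<^sup>2"

definition self_adjoint :: "'a::comm_cstar_algebra \<Rightarrow> bool" where
  "self_adjoint a \<longleftrightarrow> cstar a = a"

definition positive :: "'a::comm_cstar_algebra \<Rightarrow> bool" where
  "positive a \<longleftrightarrow> (\<exists>b. a = cstar b * b)"

definition projection :: "'a::comm_cstar_algebra \<Rightarrow> bool" where
  "projection p \<longleftrightarrow> cstar p = p \<and> p * p = p"

text \<open>Rickart: the annihilator of every element is generated by a projection.\<close>
definition rickart :: "'a::comm_cstar_algebra itself \<Rightarrow> bool" where
  "rickart _ \<longleftrightarrow> (\<forall>a::'a. \<exists>p. projection p \<and> a * p = 0 \<and> (\<forall>b. a * b = 0 \<longrightarrow> b = b * p))"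

definition zero_proj :: "'a::comm_cstar_algebra \<Rightarrow> 'a" where
  "zero_proj a = (THE p. projection p \<and> a * p = 0 \<and> (\<forall>b. a * b = 0 \<longrightarrow> b = b * p))"

datatype 'a lterm = D 'a | LTop | LBot | LMeet "'a lterm" "'a lterm" | LJoin "'a lterm" "'a lterm"

fun lwf :: "'a::comm_cstar_algebra lterm \<Rightarrow> bool" where
  "lwf (D a) = self_adjoint a"
| "lwf LTop = True"
| "lwf LBot = True"
| "lwf (LMeet x y) = (lwf x \<and> lwf y)"
| "lwf (LJoin x y) = (lwf x \<and> lwf y)"

text \<open>The least preorder on terms making the quotient a bounded distributive lattice
  and satisfying the defining relations of \<open>L_A\<close>. The lattice \<open>L_A\<close> is the set of well-formed
  terms modulo the equivalence \<open>x \<le> y \<and> y \<le> x\<close>, ordered by \<open>lle\<close>.\<close>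
inductive lle :: "'a::comm_cstar_algebra lterm \<Rightarrow> 'a lterm \<Rightarrow> bool" where
  refl: "lle x x"
| trans: "lle x y \<Longrightarrow> lle y z \<Longrightarrow> lle x z"
| meet1: "lle (LMeet x y) x"
| meet2: "lle (LMeet x y) y"
| meetI: "lle z x \<Longrightarrow> lle z y \<Longrightarrow> lle z (LMeet x y)"
| join1: "lle x (LJoin x y)"
| join2: "lle y (LJoin x y)"
| joinI: "lle x z \<Longrightarrow> lle y z \<Longrightarrow> lle (LJoin x y) z"
| bot: "lle LBot x"
| top: "lle x LTop"
| distrib: "lle (LMeet x (LJoin y z)) (LJoin (LMeet x y) (LMeet x z))"
| rel_one: "lle LTop (D 1)"
| rel_neg: "self_adjoint a \<Longrightarrow> lle (LMeet (D a) (D (- a))) LBot"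
| rel_sq: "self_adjoint b \<Longrightarrow> lle (D (- (b * b))) LBot"
| rel_add: "self_adjoint a \<Longrightarrow> self_adjoint b \<Longrightarrow> lle (D (a + b)) (LJoin (D a) (D b))"
| rel_mult1: "self_adjoint a \<Longrightarrow> self_adjoint b \<Longrightarrow>
    lle (D (a * b)) (LJoin (LMeet (D a) (D b)) (LMeet (D (- a)) (D (- b))))"
| rel_mult2: "self_adjoint a \<Longrightarrow> self_adjoint b \<Longrightarrow>
    lle (LJoin (LMeet (D a) (D b)) (LMeet (D (- a)) (D (- b)))) (D (a * b))"

definition leq :: "'a::comm_cstar_algebra lterm \<Rightarrow> 'a lterm \<Rightarrow> bool" where
  "leq x y \<longleftrightarrow> lle x y \<and> lle y x"

text \<open>A pseudocomplement on \<open>L_A\<close>, given on representatives: a map on well-formed terms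
  that is well defined on equivalence classes, antitone, and satisfies
  \<open>x \<and> y = 0 \<longleftrightarrow> x \<le> \<not> y\<close>.\<close>
definition is_pseudocomplement_LA :: "('a::comm_cstar_algebra lterm \<Rightarrow> 'a lterm) \<Rightarrow> bool" where
  "is_pseudocomplement_LA N \<longleftrightarrow>
     (\<forall>x. lwf x \<longrightarrow> lwf (N x)) \<and>
     (\<forall>x y. lwf x \<longrightarrow> lwf y \<longrightarrow> leq x y \<longrightarrow> leq (N x) (N y)) \<and>
     (\<forall>x y. lwf x \<longrightarrow> lwf y \<longrightarrow> lle x y \<longrightarrow> lle (N y) (N x)) \<and>
     (\<forall>x y. lwf x \<longrightarrow> lwf y \<longrightarrow> (leq (LMeet x y) LBot \<longleftrightarrow> lle x (N y)))"

end

theory Submission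
  imports Defs "HOL-Computational_Algebra.Formal_Power_Series"
begin

text \<open>
  Call \<open>c\<close> a sum of squares (\<open>sos c\<close>) if it is a finite sum of squares of
  self-adjoint elements; every positive element \<open>b\<^sup>* b\<close> is of this form.
  \<^item> Normal form: every well-formed lattice term is equivalent to one generator \<open>D c\<close> with
    \<open>sos c\<close>. For a generator \<open>D a\<close> take \<open>c = (a + |a|)\<^sup>2\<close>, where the absolute value \<open>|a|\<close>
    is the square of a fourth root of \<open>a\<^sup>2\<close>, obtained from the binomial series of
    \<open>(1 - h) powr (1/4)\<close>.
  \<^item> Separation: for sums of squares \<open>b\<close>, \<open>c\<close>, \<open>D b \<and> D c = 0\<close> in \<open>L_A\<close> forces \<open>b c = 0\<close>.
    Otherwise Zorn's lemma yields a prime cone \<open>P\<close> (a point of the real spectrum) not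
    containing \<open>-(b c)\<close>; evaluation of terms at \<open>P\<close> respects the defining relations of
    \<open>L_A\<close>, and \<open>D b \<and> D c\<close> evaluates to true there, a contradiction.
  \<^item> Hence, for \<open>sos c\<close>, \<open>x \<and> D c = 0 \<longleftrightarrow> x \<le> D [c = 0]\<close> by the annihilator property of the
    Rickart projection \<open>[c = 0]\<close>, and \<open>\<not> x = D [c = 0]\<close> for a normal form \<open>D c\<close> of \<open>x\<close> is
    the pseudocomplement.
\<close>

section \<open>Elementary facts on commutative C*-algebras\<close>

lemma scaleC_zero_left [simp]: "scaleC 0 (x::'a::comm_cstar_algebra) = 0"
  using scaleC_of_real[of 0 x] by simp

lemma scaleC_minus_left: "scaleC (-c) (x::'a::comm_cstar_algebra) = - scaleC c x"
  using scaleC_add_left[of c "-c" x] by (metis neg_eq_iff_add_eq_0 scaleC_zero_left add.right_inverse)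

lemma cstar_zero [simp]: "cstar (0::'a::comm_cstar_algebra) = 0"
  using cstar_add[of "0::'a" 0] by simp

lemma cstar_minus [simp]: "cstar (- x::'a::comm_cstar_algebra) = - cstar x"
  using cstar_add[of "-x" x] by (simp add: eq_neg_iff_add_eq_0)

lemma cstar_diff [simp]: "cstar (x - y::'a::comm_cstar_algebra) = cstar x - cstar y"
  using cstar_add[of x "-y"] by simp

lemma cstar_one [simp]: "cstar (1::'a::comm_cstar_algebra) = 1"
  using cstar_mult[of "cstar (1::'a)" 1] by (simp add: cstar_cstar)

lemma cstar_scaleR [simp]: "cstar (r *\<^sub>R (x::'a::comm_cstar_algebra)) = r *\<^sub>R cstar x"
  by (metis complex_cnj_complex_of_real cstar_scaleC scaleC_of_real)

lemma cstar_power: "cstar ((x::'a::comm_cstar_algebra) ^ n) = cstar x ^ n"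
  by (induction n) (auto simp: cstar_mult mult.commute)

text \<open>The involution is isometric; this follows from the C*-identity.\<close>
lemma norm_cstar [simp]: "norm (cstar (x::'a::comm_cstar_algebra)) = norm x"
proof -
  have le: "norm y \<le> norm (cstar y)" for y :: 'a
  proof (cases "norm y = 0")
    case False
    have "norm y * norm y = norm (cstar y * y)" by (simp add: cstar_identity power2_eq_square)
    also have "\<dots> \<le> norm (cstar y) * norm y" by (rule norm_mult_ineq)
    finally show ?thesis using False by (simp add: mult_le_cancel_right)
  qed simp
  show ?thesis using le[of x] le[of "cstar x"] by (simp add: cstar_cstar)
qed

lemma bounded_linear_cstar: "bounded_linear (cstar :: 'a::comm_cstar_algebra \<Rightarrow> 'a)"
  by (rule bounded_linear_intro[where K=1]) (auto simp: cstar_add)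

lemma sa_zero [simp]: "self_adjoint (0::'a::comm_cstar_algebra)"
  by (simp add: self_adjoint_def)

lemma sa_one [simp]: "self_adjoint (1::'a::comm_cstar_algebra)"
  by (simp add: self_adjoint_def)

lemma sa_add: "self_adjoint x \<Longrightarrow> self_adjoint y \<Longrightarrow> self_adjoint (x + (y::'a::comm_cstar_algebra))"
  by (simp add: self_adjoint_def cstar_add)

lemma sa_diff: "self_adjoint x \<Longrightarrow> self_adjoint y \<Longrightarrow> self_adjoint (x - (y::'a::comm_cstar_algebra))"
  by (simp add: self_adjoint_def)

lemma sa_minus: "self_adjoint x \<Longrightarrow> self_adjoint (- (x::'a::comm_cstar_algebra))"
  by (simp add: self_adjoint_def)

lemma sa_mult: "self_adjoint x \<Longrightarrow> self_adjoint y \<Longrightarrow> self_adjoint (x * (y::'a::comm_cstar_algebra))"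
  by (simp add: self_adjoint_def cstar_mult mult.commute)

lemma sa_scaleR: "self_adjoint x \<Longrightarrow> self_adjoint (r *\<^sub>R (x::'a::comm_cstar_algebra))"
  by (simp add: self_adjoint_def)

lemma sa_power: "self_adjoint x \<Longrightarrow> self_adjoint ((x::'a::comm_cstar_algebra) ^ n)"
  by (simp add: self_adjoint_def cstar_power)

lemma norm_square_sa: "self_adjoint x \<Longrightarrow> norm ((x::'a::comm_cstar_algebra) * x) = (norm x)\<^sup>2"
  using cstar_identity[of x] by (simp add: self_adjoint_def)

text \<open>The imaginary unit of the algebra; it lets us write \<open>x\<^sup>2 + y\<^sup>2\<close> as \<open>z\<^sup>* z\<close>.\<close>
definition imag_unit :: "'a::comm_cstar_algebra" where
  "imag_unit = scaleC \<i> 1"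

lemma cstar_imag_unit: "cstar (imag_unit::'a::comm_cstar_algebra) = - imag_unit"
  by (simp add: imag_unit_def cstar_scaleC scaleC_minus_left)

lemma imag_unit_square: "(imag_unit::'a::comm_cstar_algebra) * imag_unit = -1"
proof -
  have "(imag_unit::'a) * imag_unit = scaleC \<i> (1 * scaleC \<i> 1)"
    unfolding imag_unit_def by (rule scaleC_mult_left[symmetric])
  also have "\<dots> = scaleC (-1) 1" by (simp add: scaleC_scaleC)
  also have "\<dots> = -1" by (simp add: scaleC_minus_left scaleC_one)
  finally show ?thesis .
qed

lemma cstar_sa_plus_imag:
  assumes "self_adjoint x" "self_adjoint (y::'a::comm_cstar_algebra)"
  shows "cstar (x + imag_unit * y) = x - imag_unit * y"
  using assms by (simp add: self_adjoint_def cstar_add cstar_mult cstar_imag_unit mult.commute)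

lemma cstar_mult_sa_plus_imag:
  assumes "self_adjoint x" "self_adjoint (y::'a::comm_cstar_algebra)"
  shows "cstar (x + imag_unit * y) * (x + imag_unit * y) = x * x + y * y"
proof -
  have "cstar (x + imag_unit * y) * (x + imag_unit * y) = (x - imag_unit * y) * (x + imag_unit * y)"
    by (simp only: cstar_sa_plus_imag[OF assms])
  also have "\<dots> = x * x - (imag_unit * imag_unit) * (y * y)" by (simp add: algebra_simps)
  finally show ?thesis by (simp add: imag_unit_square)
qed

text \<open>Monotonicity of the norm on squares: \<open>\<parallel>x\<^sup>2\<parallel> \<le> \<parallel>x\<^sup>2 + y\<^sup>2\<parallel>\<close>, via \<open>z = x + i y\<close>
  and \<open>x = (z + z\<^sup>*)/2\<close>.\<close>
lemma norm_square_le_sum_squares: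
  assumes "self_adjoint x" "self_adjoint (y::'a::comm_cstar_algebra)"
  shows "norm (x * x) \<le> norm (x * x + y * y)"
proof -
  define z where "z = x + imag_unit * y"
  have zz: "(norm z)\<^sup>2 = norm (x * x + y * y)"
    using cstar_identity[of z] cstar_mult_sa_plus_imag[OF assms] by (simp add: z_def)
  have "x + x = z + cstar z" by (simp add: z_def cstar_sa_plus_imag[OF assms])
  then have "norm (x + x) \<le> norm z + norm z" by (metis norm_cstar norm_triangle_ineq)
  moreover have "norm (x + x) = 2 * norm x" unfolding scaleR_2[symmetric] by simp
  ultimately have "norm x \<le> norm z" by simp
  then have "(norm x)\<^sup>2 \<le> (norm z)\<^sup>2" by (simp add: power_mono)
  then show ?thesis using zz norm_square_sa[OF assms(1)] by simp
qed

text \<open>In a C*-algebra a self-adjoint nilpotent element vanishes, since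
  \<open>norm (f ^ 2 ^ n) = norm f ^ 2 ^ n\<close>.\<close>
lemma norm_power_two_pow_sa:
  "self_adjoint (f::'a::comm_cstar_algebra) \<Longrightarrow> norm (f ^ (2 ^ n)) = norm f ^ (2 ^ n)"
proof (induction n)
  case (Suc n)
  have "f ^ (2 ^ Suc n) = f ^ (2 ^ n) * f ^ (2 ^ n)" by (simp add: power_add[symmetric] mult_2)
  then have "norm (f ^ (2 ^ Suc n)) = (norm (f ^ (2 ^ n)))\<^sup>2"
    using norm_square_sa[OF sa_power[OF Suc.prems]] by simp
  then show ?case using Suc by (simp add: power_mult[symmetric] mult.commute)
qed simp

lemma sa_nilpotent_zero:
  assumes sf: "self_adjoint (f::'a::comm_cstar_algebra)" and fk: "f ^ k = 0"
  shows "f = 0"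
proof -
  have "k \<le> 2 ^ k" using less_exp[of k] by simp
  then have "f ^ (2 ^ k) = f ^ k * f ^ (2 ^ k - k)" by (simp add: power_add[symmetric])
  then have "norm f ^ (2 ^ k) = 0" using fk norm_power_two_pow_sa[OF sf, of k] by simp
  then show "f = 0" by simp
qed

section \<open>Roots via the binomial series\<close>

text \<open>\<open>binom_coeff \<alpha> n\<close> is the coefficient of \<open>h\<^sup>n\<close> in \<open>(1 - h) powr \<alpha>\<close>.\<close>
definition binom_coeff :: "real \<Rightarrow> nat \<Rightarrow> real" where
  "binom_coeff \<alpha> n = (\<alpha> gchoose n) * (-1) ^ n"

lemma binom_coeff_0 [simp]: "binom_coeff \<alpha> 0 = 1"
  by (simp add: binom_coeff_def)

lemma neg_one_power_prod: "(-1) ^ k * (\<Prod>i<k. (a::real) - of_nat i) = (\<Prod>i<k. of_nat i - a)"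
  by (induction k) (simp_all add: algebra_simps)

lemma gchoose_signed_fact: "(-1) ^ k * (a gchoose k) * fact k = (\<Prod>i<k. of_nat i - (a::real))"
proof -
  have "(-1) ^ k * (a gchoose k) * fact k = (-1) ^ k * (\<Prod>i = 0..<k. a - of_nat i)"
    by (simp add: gbinomial_mult_fact' mult.assoc)
  also have "\<dots> = (\<Prod>i<k. of_nat i - a)"
    by (simp add: atLeast0LessThan neg_one_power_prod)
  finally show ?thesis .
qed

lemma binom_coeff_Suc_nonpos:
  assumes "0 \<le> \<alpha>" "\<alpha> \<le> 1"
  shows "binom_coeff \<alpha> (Suc n) \<le> 0"
proof -
  have "binom_coeff \<alpha> (Suc n) * fact (Suc n) = (\<Prod>i<Suc n. of_nat i - \<alpha>)"
    using gchoose_signed_fact[of "Suc n" \<alpha>]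
    by (simp add: binom_coeff_def mult.commute mult.left_commute)
  also have "\<dots> = (\<Prod>i<n. of_nat (Suc i) - \<alpha>) * (0 - \<alpha>)"
    by (simp only: prod.lessThan_Suc_shift) (simp add: mult.commute)
  also have "\<dots> \<le> 0"
  proof -
    have "(\<Prod>i<n. of_nat (Suc i) - \<alpha>) \<ge> 0" using assms by (intro prod_nonneg) auto
    then show ?thesis using assms by (simp add: mult_nonneg_nonpos)
  qed
  finally have "binom_coeff \<alpha> (Suc n) * fact (Suc n) \<le> 0" .
  then show ?thesis using fact_gt_zero[where 'a=real, of "Suc n"] by (auto simp: mult_le_0_iff simp del: fact_Suc)
qed

lemma binom_coeff_partial_sum_nonneg:
  assumes "\<alpha> \<le> 1"
  shows "(\<Sum>k\<le>N. binom_coeff \<alpha> k) \<ge> 0"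
proof -
  have "(\<Sum>k\<le>N. binom_coeff \<alpha> k) = (-1) ^ N * (\<alpha> - 1 gchoose N)"
    using gbinomial_sum_lower_neg[of \<alpha> N] by (simp add: binom_coeff_def)
  moreover have "(-1) ^ N * (\<alpha> - 1 gchoose N) * fact N \<ge> 0"
    unfolding gchoose_signed_fact using assms by (intro prod_nonneg) auto
  ultimately show ?thesis
    by (metis divide_nonneg_pos fact_gt_zero nonzero_mult_div_cancel_right not_less_iff_gr_or_eq)
qed

text \<open>Since the tail coefficients are non-positive, the partial sums of \<open>\<bar>binom_coeff \<alpha> n\<bar>\<close>
  equal \<open>2 - \<Sum>k\<le>N. binom_coeff \<alpha> k \<le> 2\<close>.\<close>
lemma binom_coeff_abs_summable:
  assumes "0 \<le> \<alpha>" "\<alpha> \<le> 1"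
  shows "summable (\<lambda>n. \<bar>binom_coeff \<alpha> n\<bar>)"
proof (rule summableI_nonneg_bounded[where x=2])
  fix N
  show "(\<Sum>n<N. \<bar>binom_coeff \<alpha> n\<bar>) \<le> 2"
  proof (cases N)
    case (Suc M)
    have "(\<Sum>n<N. \<bar>binom_coeff \<alpha> n\<bar>) = 1 + (\<Sum>n<M. \<bar>binom_coeff \<alpha> (Suc n)\<bar>)"
      using Suc by (simp add: lessThan_Suc_atMost sum.atMost_shift)
    also have "(\<Sum>n<M. \<bar>binom_coeff \<alpha> (Suc n)\<bar>) = - (\<Sum>n<M. binom_coeff \<alpha> (Suc n))"
      using binom_coeff_Suc_nonpos[OF assms] by (simp add: sum_negf[symmetric])
    also have "(\<Sum>n<M. binom_coeff \<alpha> (Suc n)) = (\<Sum>k\<le>M. binom_coeff \<alpha> k) - 1"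
      by (simp add: sum.atMost_shift)
    finally show ?thesis using binom_coeff_partial_sum_nonneg[of \<alpha> M] assms by simp
  qed simp
qed simp

text \<open>The element \<open>(1 - h) powr \<alpha>\<close> for \<open>norm h \<le> 1\<close>.\<close>
definition binom_pow :: "real \<Rightarrow> 'a::comm_cstar_algebra \<Rightarrow> 'a" where
  "binom_pow \<alpha> h = (\<Sum>n. binom_coeff \<alpha> n *\<^sub>R h ^ n)"

lemma binom_pow_norm_summable:
  assumes "0 \<le> \<alpha>" "\<alpha> \<le> 1" "norm (h::'a::comm_cstar_algebra) \<le> 1"
  shows "summable (\<lambda>n. norm (binom_coeff \<alpha> n *\<^sub>R h ^ n))"
proof (rule summable_comparison_test'[OF binom_coeff_abs_summable[OF assms(1,2)]])
  fix n
  have "norm (h ^ n) \<le> norm h ^ n" by (rule norm_power_ineq)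
  also have "\<dots> \<le> 1" using assms(3) by (simp add: power_le_one)
  finally show "norm (norm (binom_coeff \<alpha> n *\<^sub>R h ^ n)) \<le> \<bar>binom_coeff \<alpha> n\<bar>"
    by (simp add: mult_left_le)
qed

text \<open>Vandermonde's identity for generalized binomials gives the Cauchy product
  \<open>(1 - h) powr \<alpha> * (1 - h) powr \<beta> = (1 - h) powr (\<alpha> + \<beta>)\<close>.\<close>
lemma binom_coeff_convolution:
  "(\<Sum>i\<le>k. binom_coeff \<alpha> i * binom_coeff \<beta> (k - i)) = binom_coeff (\<alpha> + \<beta>) k"
proof -
  have "(\<Sum>i\<le>k. binom_coeff \<alpha> i * binom_coeff \<beta> (k - i))
      = (\<Sum>i\<le>k. (-1) ^ k * ((\<alpha> gchoose i) * (\<beta> gchoose (k - i))))"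
  proof (rule sum.cong[OF HOL.refl])
    fix i assume "i \<in> {..k}"
    then have "(-1::real) ^ i * (-1) ^ (k - i) = (-1) ^ k" by (simp add: power_add[symmetric])
    then show "binom_coeff \<alpha> i * binom_coeff \<beta> (k - i) = (-1) ^ k * ((\<alpha> gchoose i) * (\<beta> gchoose (k - i)))"
      unfolding binom_coeff_def by (metis (no_types, lifting) mult.commute mult.left_commute)
  qed
  also have "\<dots> = (-1) ^ k * ((\<alpha> + \<beta>) gchoose k)"
    using gbinomial_Vandermonde[of \<alpha> \<beta> k] by (simp add: sum_distrib_left[symmetric] atLeast0AtMost)
  finally show ?thesis by (simp add: binom_coeff_def mult.commute)
qed

lemma binom_pow_add:
  assumes "0 \<le> \<alpha>" "\<alpha> \<le> 1" "0 \<le> \<beta>" "\<beta> \<le> 1" "norm (h::'a::comm_cstar_algebra) \<le> 1"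
  shows "binom_pow \<alpha> h * binom_pow \<beta> h = binom_pow (\<alpha> + \<beta>) h"
proof -
  have "binom_pow \<alpha> h * binom_pow \<beta> h
      = (\<Sum>k. \<Sum>i\<le>k. (binom_coeff \<alpha> i *\<^sub>R h ^ i) * (binom_coeff \<beta> (k - i) *\<^sub>R h ^ (k - i)))"
    unfolding binom_pow_def
    by (rule Cauchy_product[OF binom_pow_norm_summable[OF assms(1,2,5)]
                               binom_pow_norm_summable[OF assms(3,4,5)]])
  also have "\<dots> = (\<Sum>k. binom_coeff (\<alpha> + \<beta>) k *\<^sub>R h ^ k)"
  proof (rule suminf_cong)
    fix k
    have "(\<Sum>i\<le>k. (binom_coeff \<alpha> i *\<^sub>R h ^ i) * (binom_coeff \<beta> (k - i) *\<^sub>R h ^ (k - i)))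
        = (\<Sum>i\<le>k. (binom_coeff \<alpha> i * binom_coeff \<beta> (k - i)) *\<^sub>R h ^ k)"
    proof (rule sum.cong[OF HOL.refl])
      fix i assume "i \<in> {..k}"
      then have "h ^ i * h ^ (k - i) = h ^ k" by (simp add: power_add[symmetric])
      then show "(binom_coeff \<alpha> i *\<^sub>R h ^ i) * (binom_coeff \<beta> (k - i) *\<^sub>R h ^ (k - i))
          = (binom_coeff \<alpha> i * binom_coeff \<beta> (k - i)) *\<^sub>R h ^ k" by simp
    qed
    also have "\<dots> = binom_coeff (\<alpha> + \<beta>) k *\<^sub>R h ^ k"
      by (simp add: scaleR_sum_left[symmetric] binom_coeff_convolution)
    finally show "(\<Sum>i\<le>k. (binom_coeff \<alpha> i *\<^sub>R h ^ i) * (binom_coeff \<beta> (k - i) *\<^sub>R h ^ (k - i)))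
        = binom_coeff (\<alpha> + \<beta>) k *\<^sub>R h ^ k" .
  qed
  finally show ?thesis by (simp add: binom_pow_def)
qed

lemma binom_pow_one: "binom_pow 1 (h::'a::comm_cstar_algebra) = 1 - h"
proof -
  have "binom_coeff 1 n = 0" if "n \<notin> {..<2}" for n
  proof -
    have "(1::real) gchoose n = of_nat (1 choose n)" by (metis binomial_gbinomial of_nat_1)
    then show ?thesis using that by (simp add: binom_coeff_def binomial_eq_0)
  qed
  then have "binom_pow 1 h = (\<Sum>n<2. binom_coeff 1 n *\<^sub>R h ^ n)"
    unfolding binom_pow_def by (intro suminf_finite) auto
  also have "\<dots> = 1 - h" by (simp add: binom_coeff_def numeral_2_eq_2)
  finally show ?thesis .
qed

lemma binom_pow_sa:
  assumes "0 \<le> \<alpha>" "\<alpha> \<le> 1" "norm (h::'a::comm_cstar_algebra) \<le> 1" "self_adjoint h"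
  shows "self_adjoint (binom_pow \<alpha> h)"
proof -
  have s: "summable (\<lambda>n. binom_coeff \<alpha> n *\<^sub>R h ^ n)"
    by (rule summable_norm_cancel[OF binom_pow_norm_summable[OF assms(1-3)]])
  have "cstar (binom_pow \<alpha> h) = (\<Sum>n. cstar (binom_coeff \<alpha> n *\<^sub>R h ^ n))"
    unfolding binom_pow_def by (rule bounded_linear.suminf[OF bounded_linear_cstar s])
  also have "\<dots> = binom_pow \<alpha> h"
    using assms(4) by (simp add: binom_pow_def cstar_power self_adjoint_def)
  finally show ?thesis by (simp add: self_adjoint_def)
qed

lemma sa_sqrt_one_minus:
  assumes "norm (k::'a::comm_cstar_algebra) \<le> 1" "self_adjoint k"
  shows "\<exists>r. self_adjoint r \<and> r * r = 1 - k"
proof -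
  have "binom_pow (1/2) k * binom_pow (1/2) k = 1 - k"
    using binom_pow_add[of "1/2" "1/2" k] assms by (simp add: binom_pow_one)
  then show ?thesis using binom_pow_sa[of "1/2" k] assms by auto
qed

lemma sa_fourth_root_one_minus:
  assumes "norm (k::'a::comm_cstar_algebra) \<le> 1" "self_adjoint k"
  shows "\<exists>r. self_adjoint r \<and> (r * r) * (r * r) = 1 - k"
proof -
  have "binom_pow (1/4) k * binom_pow (1/4) k = binom_pow (1/2) k"
    using binom_pow_add[of "1/4" "1/4" k] assms by simp
  moreover have "binom_pow (1/2) k * binom_pow (1/2) k = 1 - k"
    using binom_pow_add[of "1/2" "1/2" k] assms by (simp add: binom_pow_one)
  moreover have "self_adjoint (binom_pow (1/4) k)" using binom_pow_sa[of "1/4" k] assms by simp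
  ultimately show ?thesis by metis
qed

text \<open>Rescaling: if \<open>norm (x\<^sup>2) \<le> m\<close> then \<open>m - x\<^sup>2\<close> lies in the ball of radius \<open>m\<close>, so the
  roots above apply to \<open>1 - x\<^sup>2/m\<close>.\<close>
lemma norm_one_minus_square:
  assumes "self_adjoint (x::'a::comm_cstar_algebra)" "norm (x * x) \<le> 1"
  shows "norm (1 - x * x) \<le> 1"
proof -
  obtain r where r: "self_adjoint r" "r * r = 1 - x * x"
    using sa_sqrt_one_minus[of "x * x"] assms sa_mult by blast
  have "norm (r * r) \<le> norm (r * r + x * x)" by (rule norm_square_le_sum_squares[OF r(1) assms(1)])
  then show ?thesis using r by simp
qed

lemma norm_scaled_one_minus_square:
  assumes "self_adjoint (x::'a::comm_cstar_algebra)" "0 < m" "norm (x * x) \<le> m"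
  shows "norm (m *\<^sub>R 1 - x * x) \<le> m"
proof -
  define y where "y = (1 / sqrt m) *\<^sub>R x"
  have yy: "y * y = (1 / m) *\<^sub>R (x * x)"
    using assms(2) by (simp add: y_def real_sqrt_mult[symmetric])
  have "self_adjoint y" by (simp add: y_def sa_scaleR assms(1))
  moreover have "norm (y * y) \<le> 1" using assms(2,3) by (simp add: yy divide_le_eq_1)
  ultimately have n: "norm (1 - y * y) \<le> 1" by (rule norm_one_minus_square)
  have "m *\<^sub>R 1 - x * x = m *\<^sub>R (1 - y * y)"
    using assms(2) by (simp add: yy scaleR_diff_right)
  then show ?thesis using n assms(2) by (simp add: mult_le_cancel_left1)
qed

lemma sum_two_squares_is_square:
  assumes "self_adjoint (x::'a::comm_cstar_algebra)" "self_adjoint y"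
  shows "\<exists>v. self_adjoint v \<and> v * v = x * x + y * y"
proof -
  define m where "m = norm (x * x) + norm (y * y) + 1"
  have m0: "0 < m" by (simp add: m_def add_nonneg_pos)
  define h where "h = (1 / (2 * m)) *\<^sub>R ((m *\<^sub>R 1 - x * x) + (m *\<^sub>R 1 - y * y))"
  have "norm (m *\<^sub>R 1 - x * x) \<le> m" "norm (m *\<^sub>R 1 - y * y) \<le> m"
    by (rule norm_scaled_one_minus_square[OF assms(1) m0], simp add: m_def,
        rule norm_scaled_one_minus_square[OF assms(2) m0], simp add: m_def)
  then have "norm ((m *\<^sub>R 1 - x * x) + (m *\<^sub>R 1 - y * y)) \<le> m + m"
    by (meson add_mono norm_triangle_ineq order_trans)
  then have nh: "norm h \<le> 1" using m0 unfolding h_def norm_scaleR by (simp add: divide_le_eq_1)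
  have sh: "self_adjoint h"
    unfolding h_def by (intro sa_scaleR sa_add sa_diff sa_mult assms) simp_all
  obtain r where r: "self_adjoint r" "r * r = 1 - h" using sa_sqrt_one_minus[OF nh sh] by blast
  have "1 - h = (1 / (2 * m)) *\<^sub>R (x * x + y * y)"
    using m0 by (simp add: h_def algebra_simps scaleR_2[symmetric])
  then have "(sqrt (2 * m) *\<^sub>R r) * (sqrt (2 * m) *\<^sub>R r) = x * x + y * y"
    using m0 by (simp add: r(2) real_sqrt_mult[symmetric])
  then show ?thesis using sa_scaleR[OF r(1)] by blast
qed

text \<open>\<open>a\<^sup>2\<close> has a self-adjoint fourth root \<open>s\<close>; then \<open>s\<^sup>2\<close> is the absolute value of \<open>a\<close>.\<close>
lemma square_is_fourth_power:
  assumes "self_adjoint (a::'a::comm_cstar_algebra)"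
  shows "\<exists>s. self_adjoint s \<and> (s * s) * (s * s) = a * a"
proof -
  define m where "m = norm (a * a) + 1"
  have m0: "0 < m" by (simp add: m_def add_nonneg_pos)
  define h where "h = (1 / m) *\<^sub>R (m *\<^sub>R 1 - a * a)"
  have "norm (m *\<^sub>R 1 - a * a) \<le> m"
    by (rule norm_scaled_one_minus_square[OF assms m0]) (simp add: m_def)
  then have nh: "norm h \<le> 1" using m0 unfolding h_def norm_scaleR by (simp add: divide_le_eq_1)
  have sh: "self_adjoint h" unfolding h_def by (intro sa_scaleR sa_diff sa_mult assms) simp_all
  obtain r where r: "self_adjoint r" "(r * r) * (r * r) = 1 - h"
    using sa_fourth_root_one_minus[OF nh sh] by blast
  have "1 - h = (1 / m) *\<^sub>R (a * a)"
    using m0 by (simp add: h_def scaleR_diff_right)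
  then have "(sqrt (sqrt m) *\<^sub>R r) * (sqrt (sqrt m) *\<^sub>R r) * ((sqrt (sqrt m) *\<^sub>R r) * (sqrt (sqrt m) *\<^sub>R r))
      = a * a"
    using m0 by (simp add: r(2)[symmetric] real_sqrt_mult[symmetric] algebra_simps)
  then show ?thesis using sa_scaleR[OF r(1)] by blast
qed

section \<open>Sums of squares\<close>

text \<open>Sums of squares of self-adjoint elements; they play the role of the positive cone
  and contain every positive element \<open>b\<^sup>* b\<close>.\<close>
inductive sos :: "'a::comm_cstar_algebra \<Rightarrow> bool" where
  sos_zero: "sos 0"
| sos_add_square: "self_adjoint x \<Longrightarrow> sos s \<Longrightarrow> sos (x * x + s)"

lemma sos_sa: "sos s \<Longrightarrow> self_adjoint s"
  by (induction rule: sos.induct) (auto intro: sa_add sa_mult)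

lemma sos_square: "self_adjoint x \<Longrightarrow> sos (x * x)"
  using sos_add_square[OF _ sos_zero] by fastforce

lemma sos_one: "sos (1::'a::comm_cstar_algebra)"
  using sos_square[of "1::'a"] by simp

lemma sos_add: "sos s \<Longrightarrow> sos t \<Longrightarrow> sos (s + t)"
  by (induction rule: sos.induct) (auto simp: add.assoc intro: sos_add_square)

lemma sos_mult_square: "sos t \<Longrightarrow> self_adjoint x \<Longrightarrow> sos (x * x * t)"
proof (induction rule: sos.induct)
  case (sos_add_square y s)
  have "x * x * (y * y + s) = (x * y) * (x * y) + x * x * s" by (simp add: algebra_simps)
  then show ?case using sos_add_square by (auto intro!: sos.sos_add_square sa_mult)
qed (simp add: sos_zero)

lemma sos_mult: "sos s \<Longrightarrow> sos t \<Longrightarrow> sos (s * t)"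
proof (induction rule: sos.induct)
  case (sos_add_square x s)
  have "(x * x + s) * t = x * x * t + s * t" by (simp add: algebra_simps)
  then show ?case using sos_add_square sos_mult_square sos_add by metis
qed (simp add: sos_zero)

lemma norm_square_le_plus_sos: "sos s \<Longrightarrow> self_adjoint y \<Longrightarrow> norm (y * y) \<le> norm (y * y + s)"
proof (induction arbitrary: y rule: sos.induct)
  case (sos_add_square x s)
  obtain v where v: "self_adjoint v" "v * v = y * y + x * x"
    using sum_two_squares_is_square[OF sos_add_square(4,1)] by blast
  have "norm (y * y) \<le> norm (y * y + x * x)" by (rule norm_square_le_sum_squares[OF sos_add_square(4,1)])
  also have "\<dots> = norm (v * v)" by (simp add: v)
  also have "\<dots> \<le> norm (v * v + s)" by (rule sos_add_square(3)[OF v(1)])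
  also have "v * v + s = y * y + (x * x + s)" by (simp add: v add.assoc)
  finally show ?case .
qed simp

lemma square_plus_sos_zero: "sos s \<Longrightarrow> self_adjoint y \<Longrightarrow> y * y + s = 0 \<Longrightarrow> y = 0"
  using norm_square_le_plus_sos[of s y] norm_square_sa[of y] by simp

text \<open>A positive element \<open>b\<^sup>* b\<close> is \<open>x\<^sup>2 + y\<^sup>2\<close> for the real and imaginary parts \<open>x\<close>, \<open>y\<close> of \<open>b\<close>.\<close>
lemma positive_imp_sos:
  assumes "positive (a::'a::comm_cstar_algebra)"
  shows "sos a"
proof -
  obtain b where ab: "a = cstar b * b" using assms by (auto simp: positive_def)
  define x where "x = (1/2) *\<^sub>R (b + cstar b)"
  define y where "y = (1/2) *\<^sub>R (imag_unit * (cstar b - b))"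
  have sx: "self_adjoint x" by (simp add: x_def self_adjoint_def cstar_add cstar_cstar add.commute)
  have sy: "self_adjoint y"
    by (simp add: y_def self_adjoint_def cstar_mult cstar_cstar cstar_imag_unit algebra_simps)
  have "imag_unit * y = (1/2) *\<^sub>R ((imag_unit * imag_unit) * (cstar b - b))"
    by (simp add: y_def mult.assoc)
  also have "\<dots> = (1/2) *\<^sub>R (b - cstar b)" by (simp add: imag_unit_square)
  finally have "x + imag_unit * y = (1/2) *\<^sub>R (b + b)" by (simp add: x_def scaleR_add_right[symmetric])
  then have "b = x + imag_unit * y" by (simp add: scaleR_2[symmetric])
  then have "a = x * x + y * y" using ab cstar_mult_sa_plus_imag[OF sx sy] by simp
  then show ?thesis using sx sy by (auto intro!: sos_add_square sos_square)
qed

section \<open>Prime cones\<close>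

text \<open>Prime cones give the evaluations of lattice terms used to separate elements of \<open>L_A\<close>.\<close>
definition cone :: "'a::comm_cstar_algebra set \<Rightarrow> bool" where
  "cone P \<longleftrightarrow> (\<forall>x\<in>P. self_adjoint x) \<and> (\<forall>x\<in>P. \<forall>y\<in>P. x + y \<in> P \<and> x * y \<in> P)
     \<and> (\<forall>x. self_adjoint x \<longrightarrow> x * x \<in> P)"

definition prime_cone :: "'a::comm_cstar_algebra set \<Rightarrow> bool" where
  "prime_cone P \<longleftrightarrow> cone P \<and> -1 \<notin> P \<and> (\<forall>a. self_adjoint a \<longrightarrow> a \<in> P \<or> -a \<in> P) \<and>
     (\<forall>a b. self_adjoint a \<longrightarrow> self_adjoint b \<longrightarrow> -a \<notin> P \<longrightarrow> -b \<notin> P \<longrightarrow> -(a * b) \<notin> P)"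

definition cone_adjoin :: "'a::comm_cstar_algebra set \<Rightarrow> 'a \<Rightarrow> 'a set" where
  "cone_adjoin M a = {s + a * t | s t. s \<in> M \<and> t \<in> M}"

lemma cone_zero: "cone P \<Longrightarrow> 0 \<in> P"
  unfolding cone_def using sa_zero by fastforce

lemma cone_one: "cone P \<Longrightarrow> 1 \<in> P"
  unfolding cone_def using sa_one by fastforce

lemma cone_square_power: "cone P \<Longrightarrow> self_adjoint f \<Longrightarrow> (f * f) ^ k \<in> P"
  by (simp add: cone_def power_mult_distrib sa_power)

lemma sos_in_cone: "sos s \<Longrightarrow> cone P \<Longrightarrow> s \<in> P"
  by (induction rule: sos.induct) (auto simp: cone_def cone_zero)

text \<open>Adjoining a self-adjoint element to a cone yields a cone (uses that \<open>a\<^sup>2 \<in> M\<close>).\<close>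
lemma cone_cone_adjoin:
  assumes c: "cone M" and a: "self_adjoint a"
  shows "cone (cone_adjoin M a)"
proof -
  have sa: "\<forall>x\<in>M. self_adjoint x" and cl: "\<forall>x\<in>M. \<forall>y\<in>M. x + y \<in> M \<and> x * y \<in> M"
    and sq: "\<forall>x. self_adjoint x \<longrightarrow> x * x \<in> M" using c by (auto simp: cone_def)
  have closed: "x + y \<in> cone_adjoin M a \<and> x * y \<in> cone_adjoin M a"
    if xy: "x \<in> cone_adjoin M a" "y \<in> cone_adjoin M a" for x y
  proof -
    obtain s1 t1 s2 t2 where x: "x = s1 + a * t1" "s1 \<in> M" "t1 \<in> M"
      and y: "y = s2 + a * t2" "s2 \<in> M" "t2 \<in> M" using xy by (auto simp: cone_adjoin_def)
    have "x + y = (s1 + s2) + a * (t1 + t2)"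
      and "x * y = (s1 * s2 + (a * a) * (t1 * t2)) + a * (s1 * t2 + t1 * s2)"
      by (simp_all add: x y algebra_simps)
    moreover have "a * a \<in> M" using sq a by blast
    ultimately show ?thesis using cl x y unfolding cone_adjoin_def by blast
  qed
  have "x * x \<in> cone_adjoin M a" if "self_adjoint x" for x
    using sq that cone_zero[OF c] unfolding cone_adjoin_def by force
  moreover have "\<forall>x\<in>cone_adjoin M a. self_adjoint x"
    using sa a by (auto simp: cone_adjoin_def intro!: sa_add sa_mult)
  ultimately show ?thesis using closed by (auto simp: cone_def)
qed

lemma subset_cone_adjoin: "cone M \<Longrightarrow> M \<subseteq> cone_adjoin M a"
  unfolding cone_adjoin_def using cone_zero by force

lemma mem_cone_adjoin: "cone M \<Longrightarrow> a \<in> cone_adjoin M a"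
  unfolding cone_adjoin_def using cone_zero cone_one by force

text \<open>Cones avoiding \<open>-(f\<^sup>2)\<^sup>k\<close> for all \<open>k\<close>. A maximal one is a prime cone omitting \<open>-f\<^sup>2\<close>;
  this is the Zorn's lemma argument of the abstract Positivstellensatz.\<close>
definition avoiding_cone :: "'a::comm_cstar_algebra \<Rightarrow> 'a set \<Rightarrow> bool" where
  "avoiding_cone f P \<longleftrightarrow> cone P \<and> (\<forall>k. -((f * f) ^ k) \<notin> P)"

text \<open>The sums of squares form an avoiding cone: \<open>(f\<^sup>k)\<^sup>2 + s = 0\<close> with \<open>sos s\<close> would
  force \<open>f\<^sup>k = 0\<close>, but a non-zero self-adjoint element is not nilpotent.\<close>
lemma avoiding_cone_sos:
  assumes f: "self_adjoint (f::'a::comm_cstar_algebra)" "f \<noteq> 0"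
  shows "avoiding_cone f (Collect sos)"
proof -
  have "\<not> sos (-((f * f) ^ k))" for k
  proof
    assume "sos (-((f * f) ^ k))"
    moreover have "f ^ k * f ^ k + (-((f * f) ^ k)) = 0" by (simp add: power_mult_distrib)
    ultimately have "f ^ k = 0" using square_plus_sos_zero sa_power[OF f(1)] by blast
    then show False using sa_nilpotent_zero[OF f(1)] f(2) by blast
  qed
  moreover have "cone (Collect sos :: 'a set)"
    unfolding cone_def by (auto intro: sos_sa sos_add sos_mult sos_square)
  ultimately show ?thesis by (simp add: avoiding_cone_def)
qed

lemma avoiding_cone_chain_Union:
  assumes "\<C> \<noteq> {}" "subset.chain {P. avoiding_cone f P} \<C>"
  shows "avoiding_cone f (\<Union>\<C>)"
proof -
  have CA: "\<And>P. P \<in> \<C> \<Longrightarrow> cone P \<and> (\<forall>k. -((f * f) ^ k) \<notin> P)"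
    and lin: "\<forall>X\<in>\<C>. \<forall>Y\<in>\<C>. X \<subseteq> Y \<or> Y \<subseteq> X"
    using assms(2) by (auto simp: subset.chain_def avoiding_cone_def)
  obtain X0 where X0: "X0 \<in> \<C>" using assms(1) by blast
  have closed: "x + y \<in> \<Union>\<C> \<and> x * y \<in> \<Union>\<C>" if xy: "x \<in> \<Union>\<C>" "y \<in> \<Union>\<C>" for x y
  proof -
    obtain X Y where XY: "X \<in> \<C>" "Y \<in> \<C>" "x \<in> X" "y \<in> Y" using xy by blast
    then obtain Z where Z: "Z \<in> \<C>" "x \<in> Z" "y \<in> Z" using lin by blast
    have "x + y \<in> Z \<and> x * y \<in> Z" using CA[OF Z(1)] Z(2,3) unfolding cone_def by blast
    then show ?thesis using Z(1) by blast
  qed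
  have squares: "x * x \<in> \<Union>\<C>" if "self_adjoint x" for x
    using CA[OF X0] X0 that unfolding cone_def by blast
  have "\<forall>x\<in>\<Union>\<C>. self_adjoint x" "\<forall>k. -((f * f) ^ k) \<notin> \<Union>\<C>"
    using CA unfolding cone_def by blast+
  then show ?thesis using closed squares by (simp add: avoiding_cone_def cone_def)
qed

lemma maximal_avoiding_cone_exists:
  assumes "self_adjoint (f::'a::comm_cstar_algebra)" "f \<noteq> 0"
  obtains M where "avoiding_cone f M" "\<And>X. avoiding_cone f X \<Longrightarrow> M \<subseteq> X \<Longrightarrow> X = M"
proof -
  have "{P. avoiding_cone f P} \<noteq> {}" using avoiding_cone_sos[OF assms] by blast
  from subset_Zorn_nonempty[OF this] obtain M where
    "M \<in> {P. avoiding_cone f P}" "\<forall>X\<in>{P. avoiding_cone f P}. M \<subseteq> X \<longrightarrow> X = M"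
    using avoiding_cone_chain_Union by blast
  then show ?thesis using that by blast
qed

lemma maximal_avoiding_cone_adjoin:
  assumes M: "avoiding_cone f M" "\<And>X. avoiding_cone f X \<Longrightarrow> M \<subseteq> X \<Longrightarrow> X = M"
    and a: "self_adjoint a" "a \<notin> M"
  obtains k s t where "s \<in> M" "t \<in> M" "(f * f) ^ k = -(s + a * t)"
proof -
  have cM: "cone M" using M(1) by (simp add: avoiding_cone_def)
  have "\<not> avoiding_cone f (cone_adjoin M a)"
    using M(2) subset_cone_adjoin[OF cM] mem_cone_adjoin[OF cM] a(2) by blast
  then obtain k where "-((f * f) ^ k) \<in> cone_adjoin M a"
    using cone_cone_adjoin[OF cM a(1)] by (auto simp: avoiding_cone_def)
  then obtain s t where "s \<in> M" "t \<in> M" "-((f * f) ^ k) = s + a * t"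
    unfolding cone_adjoin_def by blast
  then show ?thesis using that[of s t k] by (simp add: minus_equation_iff)
qed

text \<open>A maximal avoiding cone is prime: if totality or the sign rule failed, adjoining the
  offending elements would give two relations whose product exhibits \<open>-(f\<^sup>2)\<^sup>k \<in> M\<close>.\<close>
lemma maximal_avoiding_cone_prime:
  assumes M: "avoiding_cone f M" "\<And>X. avoiding_cone f X \<Longrightarrow> M \<subseteq> X \<Longrightarrow> X = M"
    and f: "self_adjoint f"
  shows "prime_cone M"
proof -
  have cM: "cone M" and gM: "\<And>k. -((f * f) ^ k) \<notin> M" using M(1) by (auto simp: avoiding_cone_def)
  have cl: "\<And>x y. x \<in> M \<Longrightarrow> y \<in> M \<Longrightarrow> x + y \<in> M \<and> x * y \<in> M"
    and sq: "\<And>x. self_adjoint x \<Longrightarrow> x * x \<in> M" using cM by (auto simp: cone_def)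
  have gk: "\<And>k. (f * f) ^ k \<in> M" by (rule cone_square_power[OF cM f])
  have total: "a \<in> M \<or> -a \<in> M" if a: "self_adjoint a" for a
  proof (rule ccontr)
    assume "\<not> ?thesis"
    then have "a \<notin> M" "-a \<notin> M" by auto
    obtain k s t where st: "s \<in> M" "t \<in> M" "(f * f) ^ k = -(s + a * t)"
      by (rule maximal_avoiding_cone_adjoin[OF M a \<open>a \<notin> M\<close>])
    obtain m s' t' where st': "s' \<in> M" "t' \<in> M" "(f * f) ^ m = -(s' + (-a) * t')"
      by (rule maximal_avoiding_cone_adjoin[OF M sa_minus[OF a] \<open>-a \<notin> M\<close>])
    have "-((f * f) ^ k * (f * f) ^ m) = (f * f) ^ k * s' + s * (f * f) ^ m + s * s' + (a * a) * (t * t')"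
      by (simp only: st(3) st'(3)) (simp add: algebra_simps)
    moreover have "\<dots> \<in> M" using cl gk st st' sq a by meson
    ultimately show False using gM by (metis power_add)
  qed
  have prime: "-(a * b) \<notin> M" if a: "self_adjoint a" "self_adjoint b" "-a \<notin> M" "-b \<notin> M" for a b
  proof
    assume ab: "-(a * b) \<in> M"
    have bM: "b \<in> M" using total a by blast
    obtain k s t where st: "s \<in> M" "t \<in> M" "(f * f) ^ k = -(s + (-a) * t)"
      by (rule maximal_avoiding_cone_adjoin[OF M sa_minus[OF a(1)] a(3)])
    obtain m s' t' where st': "s' \<in> M" "t' \<in> M" "(f * f) ^ m = -(s' + (-b) * t')"
      by (rule maximal_avoiding_cone_adjoin[OF M sa_minus[OF a(2)] a(4)])
    have "-((f * f) ^ k * (f * f) ^ m) = (f * f) ^ k * s' + (s * b + (-(a * b)) * t) * t'"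
      by (simp only: st(3) st'(3)) (simp add: algebra_simps)
    moreover have "\<dots> \<in> M" using cl gk st st' ab bM by meson
    ultimately show False using gM by (metis power_add)
  qed
  have "-1 \<notin> M" using gM[of 0] by simp
  then show ?thesis unfolding prime_cone_def using cM total prime by blast
qed

lemma exists_prime_cone:
  assumes "sos (f::'a::comm_cstar_algebra)" "f \<noteq> 0"
  obtains P where "prime_cone P" "-f \<notin> P"
proof -
  have f: "self_adjoint f" by (rule sos_sa[OF assms(1)])
  obtain M where M: "avoiding_cone f M" "\<And>X. avoiding_cone f X \<Longrightarrow> M \<subseteq> X \<Longrightarrow> X = M"
    using maximal_avoiding_cone_exists[OF f assms(2)] by blast
  have P: "prime_cone M" by (rule maximal_avoiding_cone_prime[OF M f])
  have cM: "cone M" and "-((f * f) ^ 1) \<notin> M" using M(1) unfolding avoiding_cone_def by blast+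
  moreover have "f \<in> M" by (rule sos_in_cone[OF assms(1) cM])
  ultimately have "-f \<notin> M" unfolding cone_def by (metis minus_mult_left power_one_right)
  then show ?thesis using that P by blast
qed

section \<open>Evaluating lattice terms at a prime cone\<close>

text \<open>At a prime cone \<open>P\<close> the generator \<open>D a\<close> is read as "\<open>a > 0\<close> at \<open>P\<close>", i.e. \<open>-a \<notin> P\<close>.\<close>
fun holds_at :: "'a::comm_cstar_algebra set \<Rightarrow> 'a lterm \<Rightarrow> bool" where
  "holds_at P (D a) = (self_adjoint a \<and> -a \<notin> P)"
| "holds_at P LTop = True"
| "holds_at P LBot = False"
| "holds_at P (LMeet x y) = (holds_at P x \<and> holds_at P y)"
| "holds_at P (LJoin x y) = (holds_at P x \<or> holds_at P y)"

lemma prime_cone_product_sign: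
  assumes P: "prime_cone P" and a: "self_adjoint a" and b: "self_adjoint b"
    and ab: "-(a * b) \<notin> P"
  shows "(-a \<notin> P \<and> -b \<notin> P) \<or> (a \<notin> P \<and> b \<notin> P)"
proof -
  have total: "\<And>x. self_adjoint x \<Longrightarrow> x \<in> P \<or> -x \<in> P"
    and mult: "\<And>x y. x \<in> P \<Longrightarrow> y \<in> P \<Longrightarrow> x * y \<in> P"
    using P by (auto simp: prime_cone_def cone_def)
  have "\<not> (a \<in> P \<and> -b \<in> P)" "\<not> (-a \<in> P \<and> b \<in> P)"
    using ab mult[of a "-b"] mult[of "-a" b] by auto
  then show ?thesis using total[OF a] total[OF b] by blast
qed

lemma holds_at_mono:
  assumes P: "prime_cone P"
  shows "lle x y \<Longrightarrow> holds_at P x \<Longrightarrow> holds_at P y"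
proof (induction rule: lle.induct)
  have m1: "-1 \<notin> P" and tot: "\<And>a. self_adjoint a \<Longrightarrow> a \<in> P \<or> -a \<in> P"
    and pr: "\<And>a b. self_adjoint a \<Longrightarrow> self_adjoint b \<Longrightarrow> -a \<notin> P \<Longrightarrow> -b \<notin> P \<Longrightarrow> -(a * b) \<notin> P"
    and add: "\<And>x y. x \<in> P \<Longrightarrow> y \<in> P \<Longrightarrow> x + y \<in> P"
    and sq: "\<And>x. self_adjoint x \<Longrightarrow> x * x \<in> P" using P by (auto simp: prime_cone_def cone_def)
  {
    case rel_one show ?case using m1 by simp
  next
    case (rel_neg a) then show ?case using tot[of a] by simp
  next
    case (rel_sq b) then show ?case using sq[of b] by simp
  next
    case (rel_add a b) then show ?case using add[of "-a" "-b"] by (auto simp: add.commute)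
  next
    case (rel_mult1 a b) then show ?case using prime_cone_product_sign[OF P] by (simp add: sa_minus)
  next
    case (rel_mult2 a b) then show ?case using pr[of a b] pr[of "-a" "-b"] by (auto intro: sa_minus sa_mult)
  }
qed auto

section \<open>Calculus in the lattice \<open>L_A\<close>\<close>

declare lle.trans [trans]

lemma meet_mono: "lle x x' \<Longrightarrow> lle y y' \<Longrightarrow> lle (LMeet x y) (LMeet x' y')"
  by (meson lle.meetI lle.meet1 lle.meet2 lle.trans)

lemma join_mono: "lle x x' \<Longrightarrow> lle y y' \<Longrightarrow> lle (LJoin x y) (LJoin x' y')"
  by (meson lle.joinI lle.join1 lle.join2 lle.trans)

lemma join_le_bot: "lle x y \<Longrightarrow> lle z LBot \<Longrightarrow> lle (LJoin x z) y"
  by (meson lle.joinI lle.bot lle.trans)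

lemma le_join_disjoint:
  assumes "lle x (LJoin y z)" "lle (LMeet x z) LBot"
  shows "lle x y"
proof -
  have "lle x (LMeet x (LJoin y z))" by (rule lle.meetI[OF lle.refl assms(1)])
  also have "lle (LMeet x (LJoin y z)) (LJoin (LMeet x y) (LMeet x z))" by (rule lle.distrib)
  also have "lle (LJoin (LMeet x y) (LMeet x z)) y"
    by (rule lle.joinI[OF lle.meet2 lle.trans[OF assms(2) lle.bot]])
  finally show ?thesis .
qed

lemma le_D_and_D_neg: "lle x (D w) \<Longrightarrow> lle x (D (- w)) \<Longrightarrow> self_adjoint w \<Longrightarrow> lle x LBot"
  by (meson lle.meetI lle.rel_neg lle.trans)

lemma D_zero: "lle (D (0::'a::comm_cstar_algebra)) LBot"
  using lle.rel_sq[of "0::'a"] by simp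

lemma D_neg_sos: "sos s \<Longrightarrow> lle (D (- s)) LBot"
proof (induction rule: sos.induct)
  case (sos_add_square x s)
  have "lle (D (- (x * x) + - s)) (LJoin (D (- (x * x))) (D (- s)))"
    by (rule lle.rel_add) (auto intro: sa_minus sa_mult sos_add_square sos_sa)
  also have "lle (LJoin (D (- (x * x))) (D (- s))) LBot"
    by (rule lle.joinI[OF lle.rel_sq[OF sos_add_square(1)] sos_add_square(3)])
  finally show ?case by (simp add: add.commute)
qed (simp add: D_zero)

lemma D_mult_le:
  assumes "self_adjoint t" "self_adjoint u" "lle (D (- t)) LBot"
  shows "lle (D (t * u)) (D u)"
proof -
  have "lle (D (t * u)) (LJoin (LMeet (D t) (D u)) (LMeet (D (- t)) (D (- u))))"
    by (rule lle.rel_mult1[OF assms(1,2)])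
  also have "lle (LJoin (LMeet (D t) (D u)) (LMeet (D (- t)) (D (- u)))) (D u)"
    by (rule lle.joinI[OF lle.meet2 lle.trans[OF lle.meet1 lle.trans[OF assms(3) lle.bot]]])
  finally show ?thesis .
qed

lemma meet_le_D_mult: "self_adjoint a \<Longrightarrow> self_adjoint b \<Longrightarrow> lle (LMeet (D a) (D b)) (D (a * b))"
  by (rule lle.trans[OF lle.join1 lle.rel_mult2])

lemma D_le_D_square: "self_adjoint u \<Longrightarrow> lle (D u) (D (u * u))"
  by (rule lle.trans[OF lle.meetI[OF lle.refl lle.refl] meet_le_D_mult])

lemma D_square_le: "self_adjoint a \<Longrightarrow> lle (D (a * a)) (LJoin (D a) (D (- a)))"
  by (meson lle.rel_mult1 lle.joinI lle.meet1 lle.join1 lle.join2 lle.trans)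

lemma D_mult_sos:
  assumes "sos b" "sos c"
  shows "leq (LMeet (D b) (D c)) (D (b * c))"
proof -
  have sb: "self_adjoint b" "self_adjoint c" using assms sos_sa by auto
  have "lle (D (b * c)) (LJoin (LMeet (D b) (D c)) (LMeet (D (- b)) (D (- c))))"
    by (rule lle.rel_mult1[OF sb])
  also have "lle (LJoin (LMeet (D b) (D c)) (LMeet (D (- b)) (D (- c)))) (LMeet (D b) (D c))"
    by (rule join_le_bot[OF lle.refl lle.trans[OF lle.meet1 D_neg_sos[OF assms(1)]]])
  finally show ?thesis using meet_le_D_mult[OF sb] by (simp add: leq_def)
qed

lemma D_add_sos:
  assumes "sos b" "sos c"
  shows "leq (LJoin (D b) (D c)) (D (b + c))"
proof -
  have sb: "self_adjoint b" "self_adjoint c" using assms sos_sa by auto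
  have le: "lle (D s) (D (s + t))" if "sos s" "sos t" for s t :: 'a
  proof -
    have "lle (D ((s + t) + - t)) (LJoin (D (s + t)) (D (- t)))"
      using that by (intro lle.rel_add) (auto intro: sa_add sa_minus sos_sa)
    also have "lle (LJoin (D (s + t)) (D (- t))) (D (s + t))"
      by (rule join_le_bot[OF lle.refl D_neg_sos[OF that(2)]])
    finally show ?thesis by simp
  qed
  show ?thesis
    unfolding leq_def using lle.rel_add[OF sb] le[OF assms] le[OF assms(2,1)]
    by (metis add.commute lle.joinI)
qed

section \<open>Normal form: every term is a generator \<open>D c\<close> with \<open>c\<close> a sum of squares\<close>

text \<open>Throughout, \<open>t\<close> is an absolute value of \<open>a\<close>: a sum of squares with \<open>t\<^sup>2 = a\<^sup>2\<close>.\<close>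

lemma D_le_D_double: "self_adjoint a \<Longrightarrow> lle (D a) (D (a + a))"
proof -
  assume a: "self_adjoint a"
  have "lle (D ((a + a) + - a)) (LJoin (D (a + a)) (D (- a)))"
    by (rule lle.rel_add[OF sa_add[OF a a] sa_minus[OF a]])
  then have "lle (D a) (LJoin (D (a + a)) (D (- a)))" by simp
  then show ?thesis by (rule le_join_disjoint[OF _ lle.rel_neg[OF a]])
qed

lemma D_le_D_plus_abs:
  assumes a: "self_adjoint a" and t: "sos t" "t * t = a * a"
  shows "lle (D a) (D (a + t))"
proof -
  define w where "w = a - t"
  have st: "self_adjoint t" by (rule sos_sa[OF t(1)])
  have sw: "self_adjoint w" by (simp add: w_def sa_diff a st)
  have ww: "w * w = (t + t) * (- w)"
    by (simp add: w_def algebra_simps t(2)[symmetric])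
  have "lle (D w) (D (w * w))" by (rule D_le_D_square[OF sw])
  also have "lle (D (w * w)) (D (- w))"
    unfolding ww by (rule D_mult_le[OF sos_sa[OF sos_add[OF t(1) t(1)]] sa_minus[OF sw]
        D_neg_sos[OF sos_add[OF t(1) t(1)]]])
  finally have w_bot: "lle (D w) LBot" by (rule le_D_and_D_neg[OF lle.refl _ sw])
  have "lle (D (a + a)) (LJoin (D (a + t)) (D w))"
    using lle.rel_add[OF sa_add[OF a st] sw] by (simp add: w_def)
  also have "lle (LJoin (D (a + t)) (D w)) (D (a + t))" by (rule join_le_bot[OF lle.refl w_bot])
  finally show ?thesis using D_le_D_double[OF a] lle.trans by blast
qed

lemma D_plus_abs_le_D:
  assumes a: "self_adjoint a" and t: "sos t" "t * t = a * a"
  shows "lle (D (a + t)) (D a)"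
proof -
  define u where "u = a + t"
  have st: "self_adjoint t" by (rule sos_sa[OF t(1)])
  have su: "self_adjoint u" by (simp add: u_def sa_add a st)
  have "lle (D t) (D (t * t))" by (rule D_le_D_square[OF st])
  also have "lle (D (t * t)) (LJoin (D a) (D (- a)))" unfolding t(2) by (rule D_square_le[OF a])
  finally have "lle (D t) (LJoin (D a) (D (- a)))" .
  then have u_le: "lle (D u) (LJoin (D a) (D (- a)))"
    unfolding u_def by (meson lle.rel_add[OF a st] lle.joinI lle.join1 lle.trans)
  have ua: "u * (- a) = t * (- u)"
    by (simp add: u_def algebra_simps t(2)[symmetric])
  have "lle (LMeet (D u) (D (- a))) (D (u * (- a)))" by (rule meet_le_D_mult[OF su sa_minus[OF a]])
  also have "lle (D (u * (- a))) (D (- u))"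
    unfolding ua by (rule D_mult_le[OF st sa_minus[OF su] D_neg_sos[OF t(1)]])
  finally have "lle (LMeet (D u) (D (- a))) LBot"
    by (rule le_D_and_D_neg[OF lle.meet1 _ su])
  then show ?thesis using le_join_disjoint[OF u_le] by (simp add: u_def)
qed

lemma D_plus_abs_equiv_square:
  assumes a: "self_adjoint a" and t: "sos t" "t * t = a * a"
  shows "leq (D (a + t)) (D ((a + t) * (a + t)))"
proof -
  have su: "self_adjoint (a + t)" by (simp add: sa_add a sos_sa[OF t(1)])
  have "(a + t) * (a + t) = (t + t) * (a + t)"
    by (simp add: algebra_simps t(2)[symmetric])
  then have "lle (D ((a + t) * (a + t))) (D (a + t))"
    using D_mult_le[OF sos_sa[OF sos_add[OF t(1) t(1)]] su D_neg_sos[OF sos_add[OF t(1) t(1)]]]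
    by simp
  then show ?thesis using D_le_D_square[OF su] by (simp add: leq_def)
qed

text \<open>Normal form of a generator, with \<open>t = s\<^sup>2\<close> for a fourth root \<open>s\<close> of \<open>a\<^sup>2\<close>.\<close>
lemma D_equiv_sos:
  assumes a: "self_adjoint (a::'a::comm_cstar_algebra)"
  shows "\<exists>c. sos c \<and> leq (D a) (D c)"
proof -
  obtain s where s: "self_adjoint s" "(s * s) * (s * s) = a * a"
    using square_is_fourth_power[OF a] by blast
  have t: "sos (s * s)" by (rule sos_square[OF s(1)])
  have "leq (D a) (D ((a + s * s) * (a + s * s)))"
    using D_le_D_plus_abs[OF a t s(2)] D_plus_abs_le_D[OF a t s(2)]
      D_plus_abs_equiv_square[OF a t s(2)] unfolding leq_def by (meson lle.trans)
  moreover have "sos ((a + s * s) * (a + s * s))"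
    by (rule sos_square[OF sa_add[OF a sos_sa[OF t]]])
  ultimately show ?thesis by blast
qed

lemma lterm_equiv_sos: "lwf y \<Longrightarrow> \<exists>c::'a::comm_cstar_algebra. sos c \<and> leq y (D c)"
proof (induction y)
  case (D a) then show ?case using D_equiv_sos by simp
next
  case LTop
  have "leq LTop (D (1::'a))" by (simp add: leq_def lle.rel_one lle.top)
  then show ?case using sos_one by blast
next
  case LBot
  have "leq LBot (D (0::'a))" by (simp add: leq_def lle.bot D_zero)
  then show ?case using sos_zero by blast
next
  case (LMeet y1 y2)
  then obtain c1 c2 where c: "sos c1" "leq y1 (D c1)" "sos c2" "leq y2 (D c2)" by auto
  then have "leq (LMeet y1 y2) (LMeet (D c1) (D c2))" by (simp add: leq_def meet_mono)
  then have "leq (LMeet y1 y2) (D (c1 * c2))"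
    using D_mult_sos[OF c(1,3)] unfolding leq_def by (meson lle.trans)
  then show ?case using sos_mult[OF c(1,3)] by blast
next
  case (LJoin y1 y2)
  then obtain c1 c2 where c: "sos c1" "leq y1 (D c1)" "sos c2" "leq y2 (D c2)" by auto
  then have "leq (LJoin y1 y2) (LJoin (D c1) (D c2))" by (simp add: leq_def join_mono)
  then have "leq (LJoin y1 y2) (D (c1 + c2))"
    using D_add_sos[OF c(1,3)] unfolding leq_def by (meson lle.trans)
  then show ?case using sos_add[OF c(1,3)] by blast
qed

section \<open>The pseudocomplement\<close>

text \<open>The defining property of the Rickart projection \<open>[a = 0]\<close>; it determines the
  projection uniquely, so \<open>zero_proj a\<close> satisfies it in a Rickart algebra.\<close>
definition is_zero_proj :: "'a::comm_cstar_algebra \<Rightarrow> 'a \<Rightarrow> bool" where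
  "is_zero_proj a p \<longleftrightarrow> projection p \<and> a * p = 0 \<and> (\<forall>b. a * b = 0 \<longrightarrow> b = b * p)"

lemma zero_proj_spec:
  assumes "rickart TYPE('a::comm_cstar_algebra)"
  shows "is_zero_proj (a::'a) (zero_proj a)"
proof -
  obtain p where p: "is_zero_proj a p" using assms by (auto simp: rickart_def is_zero_proj_def)
  have unique: "q = p" if "is_zero_proj a q" for q
  proof -
    have "q = q * p" "p = p * q" using p that by (auto simp: is_zero_proj_def)
    then show ?thesis by (simp add: mult.commute)
  qed
  have "zero_proj a = p"
    unfolding zero_proj_def is_zero_proj_def[symmetric] using p unique by (rule the_equality)
  then show ?thesis using p by simp
qed

lemma zero_proj_sa: "rickart TYPE('a::comm_cstar_algebra) \<Longrightarrow> self_adjoint (zero_proj (a::'a))"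
  using zero_proj_spec by (auto simp: is_zero_proj_def projection_def self_adjoint_def)

text \<open>The separation step: if \<open>D b \<and> D c = 0\<close> in \<open>L_A\<close> for sums of squares \<open>b\<close>, \<open>c\<close>, then
  \<open>b c = 0\<close>, since otherwise \<open>D b \<and> D c\<close> holds at a prime cone omitting \<open>-(b c)\<close>.\<close>
lemma disjoint_sos_mult_zero:
  assumes b: "sos (b::'a::comm_cstar_algebra)" and c: "sos c"
    and bc: "lle (LMeet (D b) (D c)) LBot"
  shows "b * c = 0"
proof (rule ccontr)
  assume "b * c \<noteq> 0"
  then obtain P where P: "prime_cone P" "-(b * c) \<notin> P"
    using exists_prime_cone[OF sos_mult[OF b c]] by blast
  have cP: "cone P" using P(1) by (simp add: prime_cone_def)
  have "b \<in> P" "c \<in> P" using sos_in_cone cP b c by blast+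
  then have "-b \<notin> P" "-c \<notin> P" using P(2) cP unfolding cone_def
    by (metis minus_mult_left minus_mult_right)+
  then have "holds_at P (LMeet (D b) (D c))" using sos_sa[OF b] sos_sa[OF c] by simp
  then show False using holds_at_mono[OF P(1) bc] by simp
qed

lemma meet_D_sos_bot_iff:
  assumes r: "rickart TYPE('a::comm_cstar_algebra)" and c: "sos (c::'a)" and x: "lwf x"
  shows "lle (LMeet x (D c)) LBot \<longleftrightarrow> lle x (D (zero_proj c))"
proof -
  define p where "p = zero_proj c"
  have zp: "is_zero_proj c p" unfolding p_def by (rule zero_proj_spec[OF r])
  have sp: "self_adjoint p" unfolding p_def by (rule zero_proj_sa[OF r])
  have sc: "self_adjoint c" by (rule sos_sa[OF c])
  show ?thesis unfolding p_def[symmetric]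
  proof
    assume x_bot: "lle (LMeet x (D c)) LBot"
    obtain b where b: "sos b" "leq x (D b)" using lterm_equiv_sos[OF x] by blast
    have sb: "self_adjoint b" by (rule sos_sa[OF b(1)])
    have "lle (LMeet (D b) (D c)) LBot"
      using b(2) x_bot unfolding leq_def by (meson lle.trans meet_mono lle.refl)
    then have "c * b = 0" using disjoint_sos_mult_zero[OF b(1) c] by (simp add: mult.commute)
    then have "b = b * p" using zp by (simp add: is_zero_proj_def)
    moreover have "lle (D (b * p)) (D p)"
      by (rule D_mult_le[OF sb sp D_neg_sos[OF b(1)]])
    ultimately have "lle (D b) (D p)" by simp
    then show "lle x (D p)" using b(2) unfolding leq_def by (meson lle.trans)
  next
    assume "lle x (D p)"
    then have "lle (LMeet x (D c)) (LMeet (D p) (D c))" by (rule meet_mono[OF _ lle.refl])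
    also have "lle (LMeet (D p) (D c)) (D (p * c))" by (rule meet_le_D_mult[OF sp sc])
    also have "p * c = 0" using zp by (simp add: is_zero_proj_def mult.commute)
    finally show "lle (LMeet x (D c)) LBot" using D_zero lle.trans by fastforce
  qed
qed

definition neg_LA :: "'a::comm_cstar_algebra lterm \<Rightarrow> 'a lterm" where
  "neg_LA y = D (zero_proj (SOME c. sos c \<and> leq y (D c)))"

lemma neg_LA_wf: "rickart TYPE('a::comm_cstar_algebra) \<Longrightarrow> lwf (neg_LA (y::'a lterm))"
  by (simp add: neg_LA_def zero_proj_sa)

lemma meet_bot_iff_le_neg_LA:
  assumes r: "rickart TYPE('a::comm_cstar_algebra)" and x: "lwf (x::'a lterm)" and y: "lwf y"
  shows "lle (LMeet x y) LBot \<longleftrightarrow> lle x (neg_LA y)"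
proof -
  define c where "c = (SOME c. sos c \<and> leq y (D c))"
  have "sos c \<and> leq y (D c)"
    unfolding c_def using lterm_equiv_sos[OF y] by (rule someI_ex)
  then have c: "sos c" "leq y (D c)" by blast+
  have "lle (LMeet x y) LBot \<longleftrightarrow> lle (LMeet x (D c)) LBot"
    using c(2) unfolding leq_def by (meson lle.trans meet_mono lle.refl)
  also have "\<dots> \<longleftrightarrow> lle x (neg_LA y)"
    unfolding neg_LA_def c_def[symmetric] by (rule meet_D_sos_bot_iff[OF r c(1) x])
  finally show ?thesis .
qed

text \<open>Antitonicity is a formal consequence of the characterisation above.\<close>
lemma neg_LA_antitone:
  assumes r: "rickart TYPE('a::comm_cstar_algebra)"
    and "lwf (x::'a lterm)" "lwf y" "lle x y"
  shows "lle (neg_LA y) (neg_LA x)"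
proof -
  have "lle (LMeet (neg_LA y) y) LBot"
    using meet_bot_iff_le_neg_LA[OF r neg_LA_wf[OF r] assms(3)] lle.refl by blast
  then have "lle (LMeet (neg_LA y) x) LBot" using assms(4) by (meson lle.trans meet_mono lle.refl)
  then show ?thesis using meet_bot_iff_le_neg_LA[OF r neg_LA_wf[OF r] assms(2)] by blast
qed

lemma neg_LA_is_pseudocomplement:
  assumes r: "rickart TYPE('a::comm_cstar_algebra)"
  shows "is_pseudocomplement_LA (neg_LA :: 'a lterm \<Rightarrow> 'a lterm)"
  unfolding is_pseudocomplement_LA_def
  using neg_LA_wf[OF r] neg_LA_antitone[OF r] meet_bot_iff_le_neg_LA[OF r]
  by (auto simp: leq_def lle.bot)

text \<open>On a positive generator, \<open>\<not> D a = D [a = 0]\<close>: both sides are the largest element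
  disjoint from \<open>D a\<close>.\<close>
lemma neg_LA_positive:
  assumes r: "rickart TYPE('a::comm_cstar_algebra)" and a: "positive (a::'a)"
  shows "leq (neg_LA (D a)) (D (zero_proj a))"
proof -
  have sa: "sos a" by (rule positive_imp_sos[OF a])
  have wa: "lwf (D a)" and wz: "lwf (D (zero_proj a))" using sos_sa[OF sa] zero_proj_sa[OF r] by simp_all
  have "lle (LMeet (neg_LA (D a)) (D a)) LBot"
    using meet_bot_iff_le_neg_LA[OF r neg_LA_wf[OF r] wa] lle.refl by blast
  then have "lle (neg_LA (D a)) (D (zero_proj a))" using meet_D_sos_bot_iff[OF r sa neg_LA_wf[OF r]] by blast
  moreover have "lle (LMeet (D (zero_proj a)) (D a)) LBot"
    using meet_D_sos_bot_iff[OF r sa wz] lle.refl by blast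
  then have "lle (D (zero_proj a)) (neg_LA (D a))" using meet_bot_iff_le_neg_LA[OF r wz wa] by blast
  ultimately show ?thesis by (simp add: leq_def)
qed

theorem proposition5:
  assumes "rickart TYPE('a::comm_cstar_algebra)"
  shows "\<exists>N :: 'a lterm \<Rightarrow> 'a lterm. is_pseudocomplement_LA N \<and>
           (\<forall>a::'a. positive a \<longrightarrow> leq (N (D a)) (D (zero_proj a)))"
  using neg_LA_is_pseudocomplement[OF assms] neg_LA_positive[OF assms] by blast

end
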